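(* Let $\chi,a,b,\lambda,\mu$ be positive constants with $b>2\chi\mu$. Consider the system \[ \begin{cases} \phi''-\chi(\phi\psi')'+\phi(a-b\phi)=0, & x\in\mathbb{R},\\ \psi''-\lambda\psi+\mu\phi=0, & x\in\mathbb{R}. \end{cases} \] Then $(\phi,\psi)\equiv\left(\frac{a}{b},\frac{a\mu}{b\lambda}\right)$ is the unique solution of this system with $\phi,\psi\in C^b_{\rm unif}(\mathbb{R})$ and $\inf_{x\in\mathbb{R}}\phi(x)>0$.
   Context: $C^b_{\rm unif}(\mathbb{R})$ denotes the space of bounded, uniformly continuous real functions on $\mathbb{R}$. *)

theory Defs
  imports "HOL-Analysis.Analysis"
begin

definition Cb_unif :: "(real \<Rightarrow> real) \<Rightarrow> bool" where
  "Cb_unif f \<longleftrightarrow> bounded (range f) \<and> uniformly_continuous_on UNIV f"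

text \<open>Classical (C^2) solution of
  phi'' - chi (phi psi')' + phi (a - b phi) = 0,  psi'' - lam psi + mu phi = 0  on R.
  The term (phi psi')' is written out by the product rule as phi' psi' + phi psi''.\<close>
definition classical_solution ::
  "real \<Rightarrow> real \<Rightarrow> real \<Rightarrow> real \<Rightarrow> real \<Rightarrow> (real \<Rightarrow> real) \<Rightarrow> (real \<Rightarrow> real) \<Rightarrow> bool" where
  "classical_solution chi a b lam mu phi psi \<longleftrightarrow>
     (\<exists>phi1 phi2 psi1 psi2.
        (\<forall>x. (phi has_real_derivative phi1 x) (at x)) \<and>
        (\<forall>x. (phi1 has_real_derivative phi2 x) (at x)) \<and>
        (\<forall>x. (psi has_real_derivative psi1 x) (at x)) \<and>
        (\<forall>x. (psi1 has_real_derivative psi2 x) (at x)) \<and>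
        continuous_on UNIV phi2 \<and> continuous_on UNIV psi2 \<and>
        (\<forall>x. phi2 x - chi * (phi1 x * psi1 x + phi x * psi2 x) + phi x * (a - b * phi x) = 0) \<and>
        (\<forall>x. psi2 x - lam * psi x + mu * phi x = 0))"

end

theory Submission
  imports Defs
begin

text \<open>For a C^2 function u bounded above and every e > 0 there is a point x with
  u x \<ge> sup u - e, \<bar>u' x\<bar> \<le> e and u'' x \<le> e: a maximum of u - (e/2) (x - x0)^2, where x0
  is an almost-maximiser. Applied to the second equation this gives lam sup psi \<le> mu sup phi
  and mu inf phi \<le> lam inf psi. Eliminating psi'', the first equation reads
  phi'' - chi psi' phi' = phi (chi lam psi + (b - chi mu) phi - a), with psi' bounded; at
  almost-extrema of phi, dividing by phi \<ge> inf phi > 0 and inserting the bounds on psi yields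
  (b - chi mu) sup phi + chi mu inf phi \<le> a \<le> (b - chi mu) inf phi + chi mu sup phi.
  Hence (b - 2 chi mu) (sup phi - inf phi) \<le> 0, so phi is constant, and then so is psi.\<close>

lemma field_le_epsilon_scaled:
  fixes x y C :: real
  assumes "C > 0" and "\<And>e. e > 0 \<Longrightarrow> x \<le> y + C * e"
  shows "x \<le> y"
proof (rule field_le_epsilon)
  fix e :: real
  assume "e > 0"
  then show "x \<le> y + e" using assms(2)[of "e / C"] assms(1) by simp
qed

lemma second_deriv_nonpos_at_local_max:
  fixes f f' :: "real \<Rightarrow> real" and f'' :: real
  assumes f': "\<And>y. (f has_real_derivative f' y) (at y)"
    and f'': "(f' has_real_derivative f'') (at x)"
    and "d > 0" and max: "\<forall>y. \<bar>x - y\<bar> < d \<longrightarrow> f y \<le> f x"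
  shows "f'' \<le> 0"
proof (rule ccontr)
  assume "\<not> f'' \<le> 0"
  then obtain d' where "d' > 0" and inc: "\<forall>h>0. h < d' \<longrightarrow> f' x < f' (x + h)"
    using DERIV_pos_inc_right[OF f''] by auto
  have "f' x = 0" using DERIV_local_max[OF f' \<open>d > 0\<close> max] .
  define h where "h = min d d' / 2"
  have h: "0 < h" "h < d" "h < d'" unfolding h_def using \<open>d > 0\<close> \<open>d' > 0\<close> by auto
  obtain z where z: "x < z" "z < x + h" "f (x + h) - f x = h * f' z"
    using MVT2[of x "x + h" f f'] f' h(1) by auto
  have "f' z > 0" using inc[rule_format, of "z - x"] \<open>f' x = 0\<close> z h by simp
  then have "f x < f (x + h)" using z(3) h(1) by (simp add: algebra_simps)
  moreover have "f (x + h) \<le> f x" using max h by simp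
  ultimately show False by simp
qed

lemma approximate_max_principle:
  fixes u u' u'' :: "real \<Rightarrow> real"
  assumes u': "\<And>x. (u has_real_derivative u' x) (at x)"
    and u'': "\<And>x. (u' has_real_derivative u'' x) (at x)"
    and "bdd_above (range u)" and "e > 0"
  shows "\<exists>x. Sup (range u) - e \<le> u x \<and> \<bar>u' x\<bar> \<le> e \<and> u'' x \<le> e"
proof -
  obtain x0 where x0: "Sup (range u) - e/2 < u x0"
    using less_cSup_iff[of "range u" "Sup (range u) - e/2"] assms(3,4) by auto
  define w where "w = (\<lambda>x. u x - e/2 * (x - x0)^2)"
  define w' where "w' = (\<lambda>x. u' x - e * (x - x0))"
  have w': "\<And>x. (w has_real_derivative w' x) (at x)"
    unfolding w_def w'_def by (auto intro!: derivative_eq_intros u')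
  have w'': "\<And>x. (w' has_real_derivative (u'' x - e)) (at x)"
    unfolding w'_def by (auto intro!: derivative_eq_intros u'')
  have cont: "continuous_on {x0-1..x0+1} w"
    using w' by (meson DERIV_isCont continuous_at_imp_continuous_on)
  obtain x1 where "x1 \<in> {x0-1..x0+1}" and max_Icc: "\<forall>y\<in>{x0-1..x0+1}. w y \<le> w x1"
    using continuous_attains_sup[OF compact_Icc _ cont] by auto
  then have x1: "\<bar>x1 - x0\<bar> \<le> 1" by auto
  have "w x0 \<le> w x1" using max_Icc by simp
  have max: "w y \<le> w x1" for y
  proof (cases "y \<in> {x0-1..x0+1}")
    case True
    then show ?thesis using max_Icc by auto
  next
    case False
    then have "1 < \<bar>y - x0\<bar>" by auto
    then have "1 < (y - x0)^2" by (metis abs_le_square_iff abs_one linorder_not_le one_power2)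
    then have "e/2 * 1 < e/2 * (y - x0)^2" using \<open>e > 0\<close> by (intro mult_strict_left_mono) auto
    then have "w y < u y - e/2" unfolding w_def by simp
    also have "\<dots> \<le> w x0"
      unfolding w_def using x0 cSup_upper[of "u y" "range u"] assms(3) by simp
    finally show ?thesis using \<open>w x0 \<le> w x1\<close> by simp
  qed
  have "w' x1 = 0" using DERIV_local_max[OF w', of 1 x1] max by simp
  then have "\<bar>u' x1\<bar> \<le> e" using x1 \<open>e > 0\<close> unfolding w'_def by (simp add: abs_mult mult_left_le)
  moreover have "u'' x1 - e \<le> 0"
    using second_deriv_nonpos_at_local_max[OF w' w'', of 1] max by simp
  moreover have "u x0 \<le> u x1"
  proof -
    have "0 \<le> e/2 * (x1 - x0)^2" using \<open>e > 0\<close> by simp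
    then show ?thesis using \<open>w x0 \<le> w x1\<close> unfolding w_def by simp
  qed
  ultimately show ?thesis using x0 by (intro exI[of _ x1]) simp
qed

lemma approximate_min_principle:
  fixes u u' u'' :: "real \<Rightarrow> real"
  assumes "\<And>x. (u has_real_derivative u' x) (at x)"
    and "\<And>x. (u' has_real_derivative u'' x) (at x)"
    and "bdd_below (range u)" and "e > 0"
  shows "\<exists>x. u x \<le> Inf (range u) + e \<and> \<bar>u' x\<bar> \<le> e \<and> - e \<le> u'' x"
proof -
  have "bdd_above (range (\<lambda>x. - u x))"
    using assms(3) by (metis bdd_above_uminus image_image)
  moreover have "Sup (range (\<lambda>x. - u x)) = - Inf (range u)"
    by (simp add: Inf_real_def image_image)
  moreover have "\<And>x. ((\<lambda>x. - u x) has_real_derivative - u' x) (at x)"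
    and "\<And>x. ((\<lambda>x. - u' x) has_real_derivative - u'' x) (at x)"
    using assms(1,2) by (auto intro: DERIV_minus)
  ultimately obtain x where "- Inf (range u) - e \<le> - u x" "\<bar>- u' x\<bar> \<le> e" "- u'' x \<le> e"
    using approximate_max_principle[of "\<lambda>x. - u x" "\<lambda>x. - u' x" "\<lambda>x. - u'' x" e] \<open>e > 0\<close>
    by auto
  then show ?thesis by (intro exI[of _ x]) simp
qed

lemma first_deriv_bound:
  fixes u u' u'' :: "real \<Rightarrow> real"
  assumes u': "\<And>x. (u has_real_derivative u' x) (at x)"
    and u'': "\<And>x. (u' has_real_derivative u'' x) (at x)"
    and "\<And>y. \<bar>u y\<bar> \<le> M0" and "\<And>y. \<bar>u'' y\<bar> \<le> M2"
  shows "\<bar>u' x\<bar> \<le> 2 * M0 + M2"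
proof -
  obtain z where z: "x < z" "z < x + 1" "u (x + 1) - u x = u' z"
    using MVT2[of x "x + 1" u u'] u' by auto
  obtain t where t: "u' z - u' x = (z - x) * u'' t"
    using MVT2[of x z u' u''] u'' z by auto
  have "\<bar>u' z\<bar> \<le> 2 * M0" using z assms(3)[of x] assms(3)[of "x + 1"] by auto
  moreover have "\<bar>(z - x) * u'' t\<bar> \<le> 1 * M2"
    unfolding abs_mult using z assms(4)[of t] by (intro mult_mono) auto
  ultimately show ?thesis using t by linarith
qed

lemma Sup_le_of_second_deriv_ge:
  fixes u u' u'' :: "real \<Rightarrow> real"
  assumes "\<And>x. (u has_real_derivative u' x) (at x)"
    and "\<And>x. (u' has_real_derivative u'' x) (at x)"
    and "bdd_above (range u)" and "\<beta> \<ge> 0"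
    and "\<And>x. c + \<beta> * u x \<le> u'' x"
  shows "c + \<beta> * Sup (range u) \<le> 0"
proof (rule field_le_epsilon_scaled)
  show "1 + \<beta> > 0" using \<open>\<beta> \<ge> 0\<close> by simp
  fix e :: real
  assume "e > 0"
  then obtain x where x: "Sup (range u) - e \<le> u x" "u'' x \<le> e"
    using approximate_max_principle[OF assms(1-3)] by blast
  have "\<beta> * (Sup (range u) - e) \<le> \<beta> * u x"
    using x \<open>\<beta> \<ge> 0\<close> by (intro mult_left_mono)
  then show "c + \<beta> * Sup (range u) \<le> 0 + (1 + \<beta>) * e"
    using assms(5)[of x] x by (simp add: algebra_simps)
qed

lemma Inf_ge_of_second_deriv_le:
  fixes u u' u'' :: "real \<Rightarrow> real"
  assumes "\<And>x. (u has_real_derivative u' x) (at x)"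
    and "\<And>x. (u' has_real_derivative u'' x) (at x)"
    and "bdd_below (range u)" and "\<beta> \<ge> 0"
    and "\<And>x. u'' x \<le> c + \<beta> * u x"
  shows "0 \<le> c + \<beta> * Inf (range u)"
proof -
  have "- (c + \<beta> * Inf (range u)) \<le> 0"
  proof (rule field_le_epsilon_scaled)
    show "1 + \<beta> > 0" using \<open>\<beta> \<ge> 0\<close> by simp
    fix e :: real
    assume "e > 0"
    then obtain x where x: "u x \<le> Inf (range u) + e" "- e \<le> u'' x"
      using approximate_min_principle[OF assms(1-3)] by blast
    have "\<beta> * u x \<le> \<beta> * (Inf (range u) + e)"
      using x \<open>\<beta> \<ge> 0\<close> by (intro mult_left_mono)
    then show "- (c + \<beta> * Inf (range u)) \<le> 0 + (1 + \<beta>) * e"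
      using assms(5)[of x] x by (simp add: algebra_simps)
  qed
  then show ?thesis by simp
qed

lemma le_divide_of_mult_le_of_ge:
  fixes m v t \<delta> :: real
  assumes "0 < m" "m \<le> v" "0 \<le> \<delta>" "v * t \<le> \<delta>"
  shows "t \<le> \<delta> / m"
proof (cases "t \<le> 0")
  case True
  then show ?thesis using assms by (smt (verit) divide_nonneg_pos)
next
  case False
  then have "m * t \<le> v * t" using assms(2) by (simp add: mult_right_mono)
  then show ?thesis using assms by (simp add: pos_le_divide_eq mult.commute)
qed

lemma Sup_le_of_advected_second_deriv_ge:
  fixes u u' u'' g :: "real \<Rightarrow> real"
  assumes "\<And>x. (u has_real_derivative u' x) (at x)"
    and "\<And>x. (u' has_real_derivative u'' x) (at x)"
    and "bdd_above (range u)" and "0 < m" and "\<And>y. m \<le> u y"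
    and "bounded (range g)" and "\<beta> \<ge> 0"
    and "\<And>x. u x * (c + \<beta> * u x) \<le> u'' x - g x * u' x"
  shows "c + \<beta> * Sup (range u) \<le> 0"
proof -
  obtain K where K: "\<And>y. \<bar>g y\<bar> \<le> K" using assms(6) unfolding bounded_iff by auto
  then have "K \<ge> 0" by (meson abs_ge_zero order_trans)
  show ?thesis
  proof (rule field_le_epsilon_scaled)
    show "\<beta> + (1 + K) / m > 0" using \<open>K \<ge> 0\<close> \<open>0 < m\<close> \<open>\<beta> \<ge> 0\<close> by (simp add: add_nonneg_pos)
    fix e :: real
    assume "e > 0"
    then obtain x where x: "Sup (range u) - e \<le> u x" "\<bar>u' x\<bar> \<le> e" "u'' x \<le> e"
      using approximate_max_principle[OF assms(1-3)] by blast
    have "\<bar>g x * u' x\<bar> \<le> K * e"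
      unfolding abs_mult using x(2) K[of x] by (intro mult_mono) auto
    then have "u x * (c + \<beta> * u x) \<le> (1 + K) * e"
      using assms(8)[of x] x(3) by (simp add: algebra_simps abs_le_iff)
    then have "c + \<beta> * u x \<le> (1 + K) * e / m"
      using \<open>K \<ge> 0\<close> \<open>e > 0\<close> by (intro le_divide_of_mult_le_of_ge[OF assms(4,5)]) auto
    moreover have "\<beta> * (Sup (range u) - e) \<le> \<beta> * u x"
      using x(1) \<open>\<beta> \<ge> 0\<close> by (intro mult_left_mono)
    ultimately show "c + \<beta> * Sup (range u) \<le> 0 + (\<beta> + (1 + K) / m) * e"
      by (simp add: algebra_simps)
  qed
qed

lemma Inf_ge_of_advected_second_deriv_le:
  fixes u u' u'' g :: "real \<Rightarrow> real"
  assumes "\<And>x. (u has_real_derivative u' x) (at x)"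
    and "\<And>x. (u' has_real_derivative u'' x) (at x)"
    and "0 < m" and "\<And>y. m \<le> u y"
    and "bounded (range g)" and "\<beta> \<ge> 0"
    and "\<And>x. u'' x - g x * u' x \<le> u x * (c + \<beta> * u x)"
  shows "0 \<le> c + \<beta> * Inf (range u)"
proof -
  obtain K where K: "\<And>y. \<bar>g y\<bar> \<le> K" using assms(5) unfolding bounded_iff by auto
  then have "K \<ge> 0" by (meson abs_ge_zero order_trans)
  have "bdd_below (range u)" using assms(4) by (intro bdd_belowI2)
  have "- (c + \<beta> * Inf (range u)) \<le> 0"
  proof (rule field_le_epsilon_scaled)
    show "\<beta> + (1 + K) / m > 0" using \<open>K \<ge> 0\<close> \<open>0 < m\<close> \<open>\<beta> \<ge> 0\<close> by (simp add: add_nonneg_pos)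
    fix e :: real
    assume "e > 0"
    then obtain x where x: "u x \<le> Inf (range u) + e" "\<bar>u' x\<bar> \<le> e" "- e \<le> u'' x"
      using approximate_min_principle[OF assms(1,2) \<open>bdd_below (range u)\<close>] by blast
    have "\<bar>g x * u' x\<bar> \<le> K * e"
      unfolding abs_mult using x(2) K[of x] by (intro mult_mono) auto
    then have "u x * - (c + \<beta> * u x) \<le> (1 + K) * e"
      using assms(7)[of x] x(3) by (simp add: algebra_simps abs_le_iff)
    then have "- (c + \<beta> * u x) \<le> (1 + K) * e / m"
      using \<open>K \<ge> 0\<close> \<open>e > 0\<close> by (intro le_divide_of_mult_le_of_ge[OF assms(3,4)]) auto
    moreover have "\<beta> * u x \<le> \<beta> * (Inf (range u) + e)"
      using x(1) \<open>\<beta> \<ge> 0\<close> by (intro mult_left_mono)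
    ultimately show "- (c + \<beta> * Inf (range u)) \<le> 0 + (\<beta> + (1 + K) / m) * e"
      by (simp add: algebra_simps)
  qed
  then show ?thesis by simp
qed

lemma eq_const_if_Sup_le_Inf:
  fixes f :: "'a \<Rightarrow> real"
  assumes "bdd_above (range f)" "bdd_below (range f)"
    and "Sup (range f) \<le> c" "c \<le> Inf (range f)"
  shows "f = (\<lambda>_. c)"
proof
  fix x
  show "f x = c"
    using cSup_upper[of "f x" "range f"] cInf_lower[of "f x" "range f"] assms by simp
qed

locale bounded_steady_state =
  fixes chi a b lam mu :: real and phi phi' phi'' psi psi' psi'' :: "real \<Rightarrow> real"
  assumes chi_pos: "chi > 0" and lam_pos: "lam > 0" and mu_pos: "mu > 0"
    and phi': "\<And>x. (phi has_real_derivative phi' x) (at x)"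
    and phi'': "\<And>x. (phi' has_real_derivative phi'' x) (at x)"
    and psi': "\<And>x. (psi has_real_derivative psi' x) (at x)"
    and psi'': "\<And>x. (psi' has_real_derivative psi'' x) (at x)"
    and eq_phi: "\<And>x. phi'' x - chi * (phi' x * psi' x + phi x * psi'' x) + phi x * (a - b * phi x) = 0"
    and eq_psi: "\<And>x. psi'' x - lam * psi x + mu * phi x = 0"
    and bounded_phi: "bounded (range phi)" and bounded_psi: "bounded (range psi)"
    and Inf_phi_pos: "Inf (range phi) > 0"
begin

lemma bdd_phi: "bdd_above (range phi)" "bdd_below (range phi)"
  using bounded_phi by (auto intro: bounded_imp_bdd_above bounded_imp_bdd_below)

lemma bdd_psi: "bdd_above (range psi)" "bdd_below (range psi)"
  using bounded_psi by (auto intro: bounded_imp_bdd_above bounded_imp_bdd_below)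

lemma phi_bounds: "Inf (range phi) \<le> phi x" "phi x \<le> Sup (range phi)"
  using bdd_phi by (auto intro: cSup_upper cInf_lower)

lemma psi_bounds: "Inf (range psi) \<le> psi x" "psi x \<le> Sup (range psi)"
  using bdd_psi by (auto intro: cSup_upper cInf_lower)

lemma phi_pos: "phi x > 0"
  using phi_bounds(1) Inf_phi_pos by (rule less_le_trans[rotated])

lemma Sup_psi_le: "lam * Sup (range psi) \<le> mu * Sup (range phi)"
proof -
  have "- mu * Sup (range phi) + lam * psi x \<le> psi'' x" for x
    using eq_psi[of x] mult_left_mono[OF phi_bounds(2)[of x] less_imp_le[OF mu_pos]] by simp
  then show ?thesis
    using Sup_le_of_second_deriv_ge[OF psi' psi'' bdd_psi(1), of lam "- mu * Sup (range phi)"] lam_pos by simp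
qed

lemma Inf_psi_ge: "mu * Inf (range phi) \<le> lam * Inf (range psi)"
proof -
  have "psi'' x \<le> - mu * Inf (range phi) + lam * psi x" for x
    using eq_psi[of x] mult_left_mono[OF phi_bounds(1)[of x] less_imp_le[OF mu_pos]] by simp
  then show ?thesis
    using Inf_ge_of_second_deriv_le[OF psi' psi'' bdd_psi(2), of lam "- mu * Inf (range phi)"] lam_pos by simp
qed

lemma bounded_psi': "bounded (range psi')"
proof -
  obtain M0 M1 where M0: "\<And>x. \<bar>phi x\<bar> \<le> M0" and M1: "\<And>x. \<bar>psi x\<bar> \<le> M1"
    using bounded_phi bounded_psi unfolding bounded_iff by auto
  have "\<bar>psi'' x\<bar> \<le> lam * M1 + mu * M0" for x
  proof -
    have "\<bar>psi'' x\<bar> \<le> \<bar>lam * psi x\<bar> + \<bar>mu * phi x\<bar>"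
      using eq_psi[of x] abs_triangle_ineq4[of "lam * psi x" "mu * phi x"] by simp
    also have "\<dots> = lam * \<bar>psi x\<bar> + mu * \<bar>phi x\<bar>"
      using lam_pos mu_pos by (simp add: abs_mult)
    also have "\<dots> \<le> lam * M1 + mu * M0"
      using M0[of x] M1[of x] lam_pos mu_pos by (intro add_mono mult_left_mono) auto
    finally show ?thesis .
  qed
  then show ?thesis
    unfolding bounded_iff using first_deriv_bound[OF psi' psi'' M1] by auto
qed

lemma bounded_chi_psi': "bounded (range (\<lambda>x. chi * psi' x))"
  using bounded_scaleR_comp[OF bounded_psi', of chi] by simp

lemma reaction_form:
  "phi'' x - chi * psi' x * phi' x = phi x * (chi * lam * psi x + (b - chi * mu) * phi x - a)"
proof -
  have psi'': "psi'' x = lam * psi x - mu * phi x" using eq_psi[of x] by simp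
  show ?thesis using eq_phi[of x] unfolding psi'' by (simp add: algebra_simps)
qed

lemma chi_lam_psi_bounds:
  "chi * mu * Inf (range phi) \<le> chi * lam * psi x" "chi * lam * psi x \<le> chi * mu * Sup (range phi)"
proof -
  have "mu * Inf (range phi) \<le> lam * psi x" "lam * psi x \<le> mu * Sup (range phi)"
    using Inf_psi_ge Sup_psi_le mult_left_mono[OF psi_bounds(1)[of x] less_imp_le[OF lam_pos]]
      mult_left_mono[OF psi_bounds(2)[of x] less_imp_le[OF lam_pos]] by linarith+
  then show "chi * mu * Inf (range phi) \<le> chi * lam * psi x"
    and "chi * lam * psi x \<le> chi * mu * Sup (range phi)"
    using chi_pos by (simp_all add: mult.assoc)
qed

lemma Sup_phi_le:
  assumes "chi * mu \<le> b"
  shows "(b - chi * mu) * Sup (range phi) + chi * mu * Inf (range phi) \<le> a"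
proof -
  have "phi x * (chi * mu * Inf (range phi) - a + (b - chi * mu) * phi x)
      \<le> phi'' x - chi * psi' x * phi' x" for x
    unfolding reaction_form using chi_lam_psi_bounds(1)[of x] phi_pos[of x] by (intro mult_left_mono) auto
  from Sup_le_of_advected_second_deriv_ge[where g = "\<lambda>x. chi * psi' x",
      OF phi' phi'' bdd_phi(1) Inf_phi_pos phi_bounds(1) bounded_chi_psi' _ this]
  show ?thesis using assms by simp
qed

lemma Inf_phi_ge:
  assumes "chi * mu \<le> b"
  shows "a \<le> (b - chi * mu) * Inf (range phi) + chi * mu * Sup (range phi)"
proof -
  have "phi'' x - chi * psi' x * phi' x
      \<le> phi x * (chi * mu * Sup (range phi) - a + (b - chi * mu) * phi x)" for x
    unfolding reaction_form using chi_lam_psi_bounds(2)[of x] phi_pos[of x] by (intro mult_left_mono) auto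
  from Inf_ge_of_advected_second_deriv_le[where g = "\<lambda>x. chi * psi' x",
      OF phi' phi'' Inf_phi_pos phi_bounds(1) bounded_chi_psi' _ this]
  show ?thesis using assms by simp
qed

lemma eq_homogeneous_state:
  assumes "b > 2 * chi * mu"
  shows "phi = (\<lambda>x. a / b) \<and> psi = (\<lambda>x. a * mu / (b * lam))"
proof -
  define \<Phi> m where "\<Phi> = Sup (range phi)" and "m = Inf (range phi)"
  have "chi * mu > 0" using chi_pos mu_pos by simp
  with assms have "chi * mu \<le> b" "b > 0" by linarith+
  note phi_Sup = Sup_phi_le[OF this(1), folded \<Phi>_def m_def]
    and phi_Inf = Inf_phi_ge[OF this(1), folded \<Phi>_def m_def]
  have "(b - 2 * chi * mu) * (\<Phi> - m) \<le> 0"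
    using phi_Sup phi_Inf by (simp add: algebra_simps)
  moreover have "m \<le> \<Phi>" using phi_bounds[of 0] unfolding \<Phi>_def m_def by simp
  ultimately have "\<Phi> = m" using assms by (simp add: mult_le_0_iff)
  then have phi_const: "\<Phi> \<le> a / b" "a / b \<le> m"
    using phi_Sup phi_Inf \<open>b > 0\<close> by (simp_all add: field_simps)
  then have "lam * Sup (range psi) \<le> mu * (a / b)" "mu * (a / b) \<le> lam * Inf (range psi)"
    using Sup_psi_le Inf_psi_ge mult_left_mono[of _ _ mu] mu_pos unfolding \<Phi>_def m_def
    by (meson less_imp_le order.trans)+
  then have psi_const: "Sup (range psi) \<le> a * mu / (b * lam)" "a * mu / (b * lam) \<le> Inf (range psi)"
    using lam_pos \<open>b > 0\<close> by (simp_all add: field_simps)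
  show ?thesis
    using eq_const_if_Sup_le_Inf[OF bdd_phi phi_const[unfolded \<Phi>_def m_def]]
      eq_const_if_Sup_le_Inf[OF bdd_psi psi_const] by simp
qed

end

theorem lemma2p2:
  fixes chi a b lam mu :: real
  assumes "chi > 0" "a > 0" "b > 0" "lam > 0" "mu > 0"
    and "b > 2 * chi * mu"
  shows "classical_solution chi a b lam mu (\<lambda>x. a / b) (\<lambda>x. a * mu / (b * lam))
         \<and> (\<forall>phi psi. classical_solution chi a b lam mu phi psi \<and> Cb_unif phi \<and> Cb_unif psi
               \<and> (INF x. phi x) > 0
             \<longrightarrow> phi = (\<lambda>x. a / b) \<and> psi = (\<lambda>x. a * mu / (b * lam)))"
proof (rule conjI; (intro allI impI)?)
  show "classical_solution chi a b lam mu (\<lambda>x. a / b) (\<lambda>x. a * mu / (b * lam))"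
    unfolding classical_solution_def using assms by (intro exI[of _ "\<lambda>x. 0"]) (auto simp: field_simps)
next
  fix phi psi
  assume "classical_solution chi a b lam mu phi psi \<and> Cb_unif phi \<and> Cb_unif psi \<and> (INF x. phi x) > 0"
  then obtain phi' phi'' psi' psi'' where
    "bounded_steady_state chi a b lam mu phi phi' phi'' psi psi' psi''"
    unfolding classical_solution_def Cb_unif_def bounded_steady_state_def using assms by blast
  then show "phi = (\<lambda>x. a / b) \<and> psi = (\<lambda>x. a * mu / (b * lam))"
    using assms(6) by (rule bounded_steady_state.eq_homogeneous_state)
qed

end
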